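(* Any satisfiable $d$-dim linear system $S$ with no divisibility constraints has a solution $x\in\mathbb{Z}^d$ such that $\|x\|_1\leq\left(2+d+d\cdot\|S\|\right)^{2d+1}$.
   Context: For a variable $\mathbf{x}$ ranging over $\mathbb{Z}^d$, a $d$-dim linear system without divisibility constraints is a propositional formula (boolean combination) whose atoms are equality constraints $\langle\alpha,\mathbf{x}\rangle=c$ and inequality constraints $\langle\alpha,\mathbf{x}\rangle\geq c$ with $\alpha\in\mathbb{Z}^d$, $c\in\mathbb{Z}$; its solutions are the $x\in\mathbb{Z}^d$ satisfying it. $\|S\|$ is the least $s\in\mathbb{N}$ with $\max\{\max_i|\alpha(i)|,|c|\}\leq s$ for all constraints in $S$. $\|x\|_1=\sum_i|x(i)|$. *)

theory Defs
  imports Main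
begin

datatype lsys =
    LEq "int list" int
  | LGeq "int list" int
  | LTrue
  | LFalse
  | LNot lsys
  | LAnd lsys lsys
  | LOr lsys lsys

definition ip :: "int list \<Rightarrow> int list \<Rightarrow> int" where
  "ip a x = (\<Sum>i<length a. a ! i * x ! i)"

fun sat :: "int list \<Rightarrow> lsys \<Rightarrow> bool" where
  "sat x (LEq a c) = (ip a x = c)"
| "sat x (LGeq a c) = (ip a x \<ge> c)"
| "sat x LTrue = True"
| "sat x LFalse = False"
| "sat x (LNot S) = (\<not> sat x S)"
| "sat x (LAnd S T) = (sat x S \<and> sat x T)"
| "sat x (LOr S T) = (sat x S \<or> sat x T)"

fun atoms :: "lsys \<Rightarrow> (int list \<times> int) set" where
  "atoms (LEq a c) = {(a, c)}"
| "atoms (LGeq a c) = {(a, c)}"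
| "atoms LTrue = {}"
| "atoms LFalse = {}"
| "atoms (LNot S) = atoms S"
| "atoms (LAnd S T) = atoms S \<union> atoms T"
| "atoms (LOr S T) = atoms S \<union> atoms T"

definition dim_sys :: "nat \<Rightarrow> lsys \<Rightarrow> bool" where
  "dim_sys d S = (\<forall>(a, c) \<in> atoms S. length a = d)"

definition sys_norm :: "lsys \<Rightarrow> nat" where
  "sys_norm S = (LEAST s::nat. \<forall>(a, c) \<in> atoms S.
      (\<forall>i < length a. \<bar>a ! i\<bar> \<le> int s) \<and> \<bar>c\<bar> \<le> int s)"

definition norm1 :: "int list \<Rightarrow> int" where
  "norm1 x = (\<Sum>i<length x. \<bar>x ! i\<bar>)"

end

(*
  Fix a solution y of S and homogenise.  The real points (x, t) with t \<ge> 0 that lie in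
  the orthant of (y, 1) and on the same side as y of every constraint
  (<a,x> \<ge> (c+1) t, <a,x> = c t, or <a,x> \<le> (c-1) t) form a pointed polyhedral cone K
  cut out by integer rows with entries at most B = ||S|| + 1, and every lattice point of K
  with t = 1 solves S.  Each extreme ray of K is the kernel of fewer than d + 1 of its rows,
  so Siegel's lemma spans it by an integer vector with entries at most H = ((d+1) B)^d.
  By Caratheodory, (y, 1) is a nonnegative combination of at most d + 1 such vectors;
  subtracting the integer parts of the coefficients of the generators with t = 0 gives a
  lattice point of K with t = 1 all of whose coefficients lie in [0, 1], hence with
  l1-norm at most (d+1) d H.
*)
theory Submission
  imports Defs Complex_Main "HOL-Library.Function_Algebras" "HOL-Library.FuncSet"
begin

section \<open>Siegel's lemma\<close>

text \<open>Vectors of \<open>\<int>\<^sup>n\<close> and \<open>\<real>\<^sup>n\<close> are functions on \<open>nat\<close> vanishing from \<open>n\<close> on.\<close>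

definition supported :: "nat \<Rightarrow> (nat \<Rightarrow> 'a::zero) \<Rightarrow> bool" where
  "supported n u \<longleftrightarrow> (\<forall>i\<ge>n. u i = 0)"

lemma shifted_product_bounds:
  fixes a x :: int
  assumes "\<bar>a\<bar> \<le> int B" "0 \<le> x" "x \<le> int H"
  shows "0 \<le> a * x + max 0 (- a) * int H \<and> a * x + max 0 (- a) * int H \<le> int B * int H"
proof (cases "0 \<le> a")
  case True
  then show ?thesis using assms by (simp add: mult_mono)
next
  case False
  have "a * x + max 0 (- a) * int H = (- a) * (int H - x)"
    using False by (simp add: algebra_simps)
  moreover have "(- a) * (int H - x) \<le> int B * int H"
    using False assms by (intro mult_mono) auto
  moreover have "0 \<le> (- a) * (int H - x)"
    using False assms by (intro mult_nonneg_nonneg) auto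
  ultimately show ?thesis using False by simp
qed

lemma shifted_row_sum_bounds:
  fixes g x :: "nat \<Rightarrow> int"
  assumes "\<And>i. i < n \<Longrightarrow> \<bar>g i\<bar> \<le> int B" "\<And>i. i < n \<Longrightarrow> x i \<in> {0..int H}"
  shows "(\<Sum>i<n. g i * x i + max 0 (- g i) * int H) \<in> {0..int (n * B * H)}"
proof -
  have term_bounds: "0 \<le> g i * x i + max 0 (- g i) * int H
      \<and> g i * x i + max 0 (- g i) * int H \<le> int B * int H" if "i < n" for i
    using assms[OF that] by (intro shifted_product_bounds) auto
  have "(\<Sum>i<n. g i * x i + max 0 (- g i) * int H) \<le> (\<Sum>i<n. int B * int H)"
    using term_bounds by (intro sum_mono) auto
  moreover have "0 \<le> (\<Sum>i<n. g i * x i + max 0 (- g i) * int H)"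
    using term_bounds by (intro sum_nonneg) auto
  ultimately show ?thesis by simp
qed

lemma siegel_count:
  fixes n B :: nat
  assumes "1 \<le> n" "1 \<le> B"
  defines "H \<equiv> (n * B) ^ (n - 1)"
  shows "(n * B * H + 1) ^ (n - 1) < (H + 1) ^ n"
proof -
  have "(n * B * H + 1) ^ (n - 1) \<le> (n * B * (H + 1)) ^ (n - 1)"
    using assms by (intro power_mono) (auto simp: algebra_simps)
  also have "\<dots> = H * (H + 1) ^ (n - 1)"
    by (metis H_def power_mult_distrib)
  also have "\<dots> < (H + 1) * (H + 1) ^ (n - 1)" by simp
  also have "\<dots> = (H + 1) ^ n"
    using assms(1) by (simp add: power_eq_if)
  finally show ?thesis .
qed

lemma siegel_lemma:
  fixes R :: "(nat \<Rightarrow> int) set" and n B :: nat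
  assumes finite_R: "finite R" and card_R: "card R < n" and B_pos: "1 \<le> B"
    and bounded: "\<And>g i. g \<in> R \<Longrightarrow> i < n \<Longrightarrow> \<bar>g i\<bar> \<le> int B"
  obtains x where "supported n x" "\<exists>i<n. x i \<noteq> 0" "\<forall>i<n. \<bar>x i\<bar> \<le> int ((n * B) ^ (n - 1))"
    "\<forall>g\<in>R. (\<Sum>i<n. g i * x i) = 0"
proof -
  define H where "H = (n * B) ^ (n - 1)"
  define X where "X = PiE {..<n} (\<lambda>_. {0..int H})"
  define F where "F x = restrict (\<lambda>g. \<Sum>i<n. g i * x i + max 0 (- g i) * int H) R" for x
  \<comment> \<open>Pigeonhole: \<open>F\<close> maps the \<open>(H+1)\<^sup>n\<close> points of \<open>X\<close> into a box with fewer points.\<close>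
  have "F x \<in> PiE R (\<lambda>_. {0..int (n * B * H)})" if x: "x \<in> X" for x
  proof -
    have "(\<Sum>i<n. g i * x i + max 0 (- g i) * int H) \<in> {0..int (n * B * H)}" if "g \<in> R" for g
      using x bounded[OF that] unfolding X_def by (intro shifted_row_sum_bounds) auto
    then show ?thesis unfolding F_def by auto
  qed
  then have "card (F ` X) \<le> card (PiE R (\<lambda>_. {0..int (n * B * H)}))"
    using finite_R by (intro card_mono) (auto intro: finite_PiE)
  also have "\<dots> = (n * B * H + 1) ^ card R"
    using finite_R by (simp add: card_PiE nat_add_distrib del: of_nat_mult)
  also have "\<dots> \<le> (n * B * H + 1) ^ (n - 1)"
    using card_R by (intro power_increasing) auto
  also have "\<dots> < (H + 1) ^ n"
    unfolding H_def using card_R B_pos by (intro siegel_count) auto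
  also have "\<dots> = card X"
    unfolding X_def by (simp add: card_PiE nat_add_distrib)
  finally have "\<not> inj_on F X"
    using card_image by fastforce
  then obtain x y where x: "x \<in> X" and y: "y \<in> X" and "x \<noteq> y" and F_eq: "F x = F y"
    unfolding inj_on_def by blast
  then obtain j where j: "j < n" "x j \<noteq> y j"
    using PiE_ext[OF x[unfolded X_def] y[unfolded X_def]] by auto
  define z where "z i = (if i < n then x i - y i else 0)" for i
  show thesis
  proof
    show "supported n z" unfolding supported_def z_def by simp
    show "\<exists>i<n. z i \<noteq> 0" using j unfolding z_def by auto
    show "\<forall>i<n. \<bar>z i\<bar> \<le> int ((n * B) ^ (n - 1))"
      using x y unfolding z_def X_def H_def by (force simp: PiE_iff)
    show "\<forall>g\<in>R. (\<Sum>i<n. g i * z i) = 0"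
    proof
      fix g assume "g \<in> R"
      then have "(\<Sum>i<n. g i * x i + max 0 (- g i) * int H) = (\<Sum>i<n. g i * y i + max 0 (- g i) * int H)"
        using fun_cong[OF F_eq, of g] unfolding F_def by simp
      then have "(\<Sum>i<n. g i * x i) = (\<Sum>i<n. g i * y i)"
        by (simp add: sum.distrib)
      then show "(\<Sum>i<n. g i * z i) = 0"
        by (simp add: z_def right_diff_distrib sum_subtractf)
    qed
  qed
qed

section \<open>Conic combinations of integer vectors\<close>

definition rvec :: "(nat \<Rightarrow> int) \<Rightarrow> nat \<Rightarrow> real" where
  "rvec x = (\<lambda>i. real_of_int (x i))"

definition dot :: "nat \<Rightarrow> (nat \<Rightarrow> real) \<Rightarrow> (nat \<Rightarrow> real) \<Rightarrow> real" where
  "dot n f u = (\<Sum>i<n. f i * u i)"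

definition fscale :: "real \<Rightarrow> (nat \<Rightarrow> real) \<Rightarrow> nat \<Rightarrow> real" where
  "fscale c u = (\<lambda>i. c * u i)"

definition unit_row :: "nat \<Rightarrow> 'a::zero \<Rightarrow> nat \<Rightarrow> 'a" where
  "unit_row j c = (\<lambda>k. if k = j then c else 0)"

definition lincomb :: "(nat \<Rightarrow> int) set \<Rightarrow> ((nat \<Rightarrow> int) \<Rightarrow> real) \<Rightarrow> nat \<Rightarrow> real" where
  "lincomb W \<mu> = (\<lambda>i. \<Sum>x\<in>W. \<mu> x * real_of_int (x i))"

interpretation fvec: vector_space fscale
  by unfold_locales (auto simp: fscale_def fun_eq_iff algebra_simps)

lemma sum_fun_apply: "(\<Sum>a\<in>A. F a) x = (\<Sum>a\<in>A. F a x)"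
  for F :: "'a \<Rightarrow> 'b \<Rightarrow> 'c::comm_monoid_add"
  by (induction A rule: infinite_finite_induct) auto

lemma fscale_apply [simp]: "fscale c u i = c * u i"
  by (simp add: fscale_def)

lemma rvec_apply [simp]: "rvec x i = real_of_int (x i)"
  by (simp add: rvec_def)

lemma rvec_inj: "inj rvec"
  by (auto simp: inj_def rvec_def fun_eq_iff)

lemma supported_rvec [simp]: "supported n (rvec x) \<longleftrightarrow> supported n x"
  by (simp add: supported_def)

lemma supported_unit_row: "j < n \<Longrightarrow> supported n (unit_row j c)"
  by (simp add: supported_def unit_row_def)

lemma supported_eq_0:
  assumes "supported n u" "\<forall>i<n. u i = 0"
  shows "u = 0"
  using assms by (auto simp: supported_def fun_eq_iff not_less[symmetric])

lemma dot_add [simp]: "dot n f (u + v) = dot n f u + dot n f v"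
  by (simp add: dot_def algebra_simps sum.distrib)

lemma dot_minus [simp]: "dot n f (- u) = - dot n f u"
  by (simp add: dot_def sum_negf)

lemma dot_diff [simp]: "dot n f (u - v) = dot n f u - dot n f v"
  by (simp add: dot_def algebra_simps sum_subtractf)

lemma dot_fscale [simp]: "dot n f (fscale c u) = c * dot n f u"
  by (simp add: dot_def sum_distrib_left algebra_simps)

lemma dot_minus_left [simp]: "dot n (- f) u = - dot n f u"
  by (simp add: dot_def sum_negf)

lemma dot_unit_row:
  assumes "j < n"
  shows "dot n (unit_row j c) u = c * u j"
proof -
  have "dot n (unit_row j c) u = (\<Sum>i<n. if i = j then c * u j else 0)"
    unfolding dot_def unit_row_def by (intro sum.cong) auto
  then show ?thesis using assms by simp
qed

lemma dot_rvec_rvec: "dot n (rvec g) (rvec x) = real_of_int (\<Sum>i<n. g i * x i)"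
  by (simp add: dot_def)

lemma rvec_unit_row [simp]: "rvec (unit_row j c) = unit_row j (real_of_int c)"
  by (auto simp: rvec_def unit_row_def)

lemma rvec_uminus [simp]: "rvec (- g) = - rvec g"
  by (auto simp: rvec_def)

lemma dot_lincomb: "dot n f (lincomb W \<mu>) = (\<Sum>x\<in>W. \<mu> x * dot n f (rvec x))"
  by (simp add: dot_def lincomb_def sum_distrib_left algebra_simps sum.swap[of _ W])

lemma subspace_dot_eq_0: "fvec.subspace {f. dot n f u = 0}"
  unfolding fvec.subspace_def dot_def fscale_def
  by (auto simp: algebra_simps sum.distrib sum_distrib_left[symmetric])

lemma supported_in_span_unit_rows:
  assumes "supported n f"
  shows "f \<in> fvec.span ((\<lambda>j. unit_row j 1) ` {..<n})"
proof -
  have "f = (\<Sum>j<n. fscale (f j) (unit_row j 1))"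
    using assms
    by (auto simp: fun_eq_iff sum_fun_apply supported_def unit_row_def not_less[symmetric]
        if_distrib[of "(*) _"] cong: if_cong)
  also have "\<dots> \<in> fvec.span ((\<lambda>j. unit_row j 1) ` {..<n})"
    by (intro fvec.span_sum fvec.span_scale fvec.span_base) auto
  finally show ?thesis .
qed

lemma independent_supported_card_le:
  assumes "fvec.independent S" "\<forall>f\<in>S. supported n f"
  shows "finite S" "card S \<le> n"
proof -
  have "finite S \<and> card S \<le> card ((\<lambda>j. unit_row j (1::real)) ` {..<n})"
    by (rule fvec.independent_span_bound) (use assms supported_in_span_unit_rows in auto)
  moreover have "card ((\<lambda>j. unit_row j (1::real)) ` {..<n}) \<le> n"
    using card_image_le[of "{..<n}"] by simp
  ultimately show "finite S" "card S \<le> n" by auto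
qed

lemma unit_row_in_span_of_full_independent:
  assumes "fvec.independent S" "\<forall>f\<in>S. supported n f" "card S = n" "j < n"
  shows "unit_row j 1 \<in> fvec.span S"
proof (rule ccontr)
  assume not_in_span: "unit_row j 1 \<notin> fvec.span S"
  then have "fvec.independent (insert (unit_row j 1) S)"
    using assms(1) by (rule fvec.independent_insertI)
  moreover have "\<forall>f\<in>insert (unit_row j 1) S. supported n f"
    using assms(2,4) supported_unit_row by blast
  ultimately have "card (insert (unit_row j 1) S) \<le> n"
    by (rule independent_supported_card_le)
  moreover have "unit_row j 1 \<notin> S" using not_in_span fvec.span_base by blast
  ultimately show False
    using assms independent_supported_card_le(1) by simp
qed

lemma lincomb_add_scaled:
  "lincomb W (\<lambda>x. a * \<mu> x + b * \<nu> x) = fscale a (lincomb W \<mu>) + fscale b (lincomb W \<nu>)"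
  by (simp add: lincomb_def fun_eq_iff algebra_simps sum.distrib sum_distrib_left)

lemma lincomb_cong: "(\<And>x. x \<in> W \<Longrightarrow> \<mu> x = \<nu> x) \<Longrightarrow> lincomb W \<mu> = lincomb W \<nu>"
  by (simp add: lincomb_def)

lemma lincomb_superset:
  assumes "finite W'" "W \<subseteq> W'" "\<And>x. x \<in> W' - W \<Longrightarrow> \<mu> x = 0"
  shows "lincomb W' \<mu> = lincomb W \<mu>"
  using assms unfolding lincomb_def by (auto intro!: sum.mono_neutral_right)

lemma lincomb_union:
  assumes "finite W1" "finite W2"
  shows "lincomb (W1 \<union> W2) (\<lambda>x. a * (if x \<in> W1 then \<mu>1 x else 0) + b * (if x \<in> W2 then \<mu>2 x else 0))
    = fscale a (lincomb W1 \<mu>1) + fscale b (lincomb W2 \<mu>2)"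
proof -
  have "lincomb (W1 \<union> W2) (\<lambda>x. if x \<in> W1 then \<mu>1 x else 0) = lincomb W1 \<mu>1"
    using assms by (subst lincomb_superset) (auto intro: lincomb_cong)
  moreover have "lincomb (W1 \<union> W2) (\<lambda>x. if x \<in> W2 then \<mu>2 x else 0) = lincomb W2 \<mu>2"
    using assms by (subst lincomb_superset[of "W1 \<union> W2" W2]) (auto intro: lincomb_cong)
  ultimately show ?thesis
    by (simp add: lincomb_add_scaled)
qed

lemma lincomb_between:
  assumes t_pos: "0 < t1" "0 < t2" and "finite W1" "finite W2"
    and "\<forall>x\<in>W1. 0 \<le> \<mu>1 x" "\<forall>x\<in>W2. 0 \<le> \<mu>2 x"
    and "lincomb W1 \<mu>1 = u + fscale t1 v" "lincomb W2 \<mu>2 = u + fscale t2 (- v)"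
  obtains \<mu> where "\<forall>x\<in>W1 \<union> W2. 0 \<le> \<mu> x" "lincomb (W1 \<union> W2) \<mu> = u"
proof -
  define a where "a = t2 / (t1 + t2)"
  define b where "b = t1 / (t1 + t2)"
  define \<mu> where "\<mu> x = a * (if x \<in> W1 then \<mu>1 x else 0) + b * (if x \<in> W2 then \<mu>2 x else 0)" for x
  have "t1 + t2 \<noteq> 0"
    using t_pos by simp
  then have ab: "a + b = 1" "a * t1 = b * t2"
    unfolding a_def b_def by (simp_all add: add_divide_distrib[symmetric] add.commute)
  have "u = fscale a (u + fscale t1 v) + fscale b (u + fscale t2 (- v))"
  proof
    fix i
    have "a * (u i + t1 * v i) + b * (u i + t2 * - v i) = (a + b) * u i + (a * t1 - b * t2) * v i"
      by (simp add: algebra_simps)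
    then show "u i = (fscale a (u + fscale t1 v) + fscale b (u + fscale t2 (- v))) i"
      using ab by simp
  qed
  also have "\<dots> = lincomb (W1 \<union> W2) \<mu>"
    using assms unfolding \<mu>_def by (simp add: lincomb_union)
  moreover have "\<forall>x\<in>W1 \<union> W2. 0 \<le> \<mu> x"
    using assms unfolding \<mu>_def a_def b_def by auto
  ultimately show thesis
    using that by simp
qed

lemma lincomb_coefficient_le:
  assumes "finite W" "\<forall>x\<in>W. 0 \<le> \<mu> x" "\<forall>x\<in>W. 0 \<le> x j" "x \<in> W" "x j \<noteq> 0"
  shows "\<mu> x \<le> lincomb W \<mu> j"
proof -
  have "1 \<le> x j"
    using assms(3-5) by force
  then have "\<mu> x \<le> \<mu> x * real_of_int (x j)"
    using assms(2,4) mult_left_mono[of 1 "real_of_int (x j)" "\<mu> x"] by simp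
  also have "\<dots> \<le> lincomb W \<mu> j"
    unfolding lincomb_def using assms(1-4) by (intro member_le_sum) auto
  finally show ?thesis .
qed

lemma round_lincomb:
  assumes "finite W" "\<forall>x\<in>W. 0 \<le> \<mu> x" "\<forall>x\<in>W. 0 \<le> x j" "lincomb W \<mu> = rvec y" "y j = 1"
  obtains z \<nu> where "rvec z = lincomb W \<nu>" "z j = 1" "\<forall>x\<in>W. 0 \<le> \<nu> x \<and> \<nu> x \<le> 1"
proof -
  \<comment> \<open>Subtracting integer multiples of generators with \<open>j\<close>-th coordinate \<open>0\<close> keeps the
    \<open>j\<close>-th coordinate \<open>1\<close>; the other coefficients are at most \<open>1\<close> already.\<close>
  define k where "k x = (if x j = 0 then \<lfloor>\<mu> x\<rfloor> else 0)" for x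
  define z where "z i = y i - (\<Sum>x\<in>W. k x * x i)" for i
  define \<nu> where "\<nu> x = \<mu> x - real_of_int (k x)" for x
  have "rvec z = lincomb W \<nu>"
    using assms(4) by (auto simp: fun_eq_iff z_def \<nu>_def lincomb_def left_diff_distrib sum_subtractf)
  moreover have "z j = 1"
  proof -
    have "(\<Sum>x\<in>W. k x * x j) = 0"
      by (intro sum.neutral) (simp add: k_def)
    then show ?thesis
      using assms(5) by (simp add: z_def)
  qed
  moreover have "\<forall>x\<in>W. 0 \<le> \<nu> x \<and> \<nu> x \<le> 1"
  proof
    fix x assume x: "x \<in> W"
    show "0 \<le> \<nu> x \<and> \<nu> x \<le> 1"
    proof (cases "x j = 0")
      case True
      then show ?thesis
        unfolding \<nu>_def k_def by (simp add: floor_le_iff[symmetric]) linarith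
    next
      case False
      then have "\<mu> x \<le> lincomb W \<mu> j"
        using assms(1-3) x by (rule lincomb_coefficient_le[rotated 4])
      then show ?thesis
        using False assms(2,4,5) x unfolding \<nu>_def k_def by auto
    qed
  qed
  ultimately show thesis
    using that by blast
qed

lemma ratio_test:
  fixes p q :: "'a \<Rightarrow> real"
  assumes "finite D" "D \<noteq> {}" "\<And>x. x \<in> D \<Longrightarrow> 0 < q x"
  shows "\<exists>x0\<in>D. \<forall>x\<in>D. p x0 / q x0 * q x \<le> p x"
proof -
  have "Min ((\<lambda>x. p x / q x) ` D) \<in> (\<lambda>x. p x / q x) ` D"
    using assms by (intro Min_in) auto
  then obtain x0 where "x0 \<in> D" "p x0 / q x0 = Min ((\<lambda>x. p x / q x) ` D)"
    by auto
  then have x0: "x0 \<in> D" "\<And>x. x \<in> D \<Longrightarrow> p x0 / q x0 \<le> p x / q x"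
    using assms(1) by auto
  have "p x0 / q x0 * q x \<le> p x" if "x \<in> D" for x
    using mult_right_mono[OF x0(2)[OF that], of "q x"] assms(3)[OF that] by simp
  then show ?thesis using x0 by blast
qed

lemma dependent_rvec_positive_relation:
  assumes "finite W" "fvec.dependent (rvec ` W)"
  obtains c where "lincomb W c = 0" "\<exists>x\<in>W. 0 < c x"
proof -
  have "\<exists>c'. (\<exists>v\<in>rvec ` W. c' v \<noteq> 0) \<and> (\<Sum>v\<in>rvec ` W. fscale (c' v) v) = 0"
    using assms fvec.dependent_finite[of "rvec ` W"] by blast
  then obtain c' where c'_nz: "\<exists>v\<in>rvec ` W. c' v \<noteq> 0" and "(\<Sum>v\<in>rvec ` W. fscale (c' v) v) = 0"
    by blast
  then have "(\<Sum>x\<in>W. fscale (c' (rvec x)) (rvec x)) = 0"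
    using sum.reindex[OF inj_on_subset[OF rvec_inj], of W "\<lambda>v. fscale (c' v) v"] by simp
  then have rel: "lincomb W (\<lambda>x. c' (rvec x)) = 0"
    by (simp add: lincomb_def fun_eq_iff sum_fun_apply)
  show thesis
  proof (cases "\<exists>x\<in>W. 0 < c' (rvec x)")
    case True
    then show thesis using rel that by blast
  next
    case False
    then have "\<exists>x\<in>W. 0 < - c' (rvec x)" using c'_nz by force
    moreover have "lincomb W (\<lambda>x. - c' (rvec x)) = 0"
      using lincomb_add_scaled[of W "-1" "\<lambda>x. c' (rvec x)" 0] rel by simp
    ultimately show thesis using that by blast
  qed
qed

lemma lincomb_drop_generator:
  assumes "finite W" "lincomb W c = 0" "\<exists>x\<in>W. 0 < c x" "\<forall>x\<in>W. 0 \<le> \<mu> x"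
  obtains x0 \<mu>' where "x0 \<in> W" "\<forall>x\<in>W. 0 \<le> \<mu>' x" "lincomb (W - {x0}) \<mu>' = lincomb W \<mu>"
proof -
  define D where "D = {x\<in>W. 0 < c x}"
  have "finite D" "D \<noteq> {}" "\<And>x. x \<in> D \<Longrightarrow> 0 < c x"
    using assms(1,3) unfolding D_def by auto
  then obtain x0 where x0: "x0 \<in> D" and ratio: "\<And>x. x \<in> D \<Longrightarrow> \<mu> x0 / c x0 * c x \<le> \<mu> x"
    using ratio_test[where p = \<mu>] by meson
  define t where "t = \<mu> x0 / c x0"
  define \<mu>' where "\<mu>' x = 1 * \<mu> x + (- t) * c x" for x
  have t_nonneg: "0 \<le> t" using x0 assms(4) unfolding t_def D_def by auto
  have "\<forall>x\<in>W. 0 \<le> \<mu>' x"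
  proof
    fix x assume "x \<in> W"
    show "0 \<le> \<mu>' x"
    proof (cases "x \<in> D")
      case True
      then show ?thesis using ratio[OF True] unfolding \<mu>'_def t_def by simp
    next
      case False
      then have "t * c x \<le> 0"
        using \<open>x \<in> W\<close> t_nonneg unfolding D_def by (simp add: mult_nonneg_nonpos)
      then show ?thesis using assms(4) \<open>x \<in> W\<close> unfolding \<mu>'_def by auto
    qed
  qed
  moreover have "lincomb (W - {x0}) \<mu>' = lincomb W \<mu>"
  proof -
    have "\<mu>' x0 = 0"
      using x0 unfolding \<mu>'_def t_def D_def by simp
    then have "lincomb (W - {x0}) \<mu>' = lincomb W \<mu>'"
      using assms(1) by (intro lincomb_superset[symmetric]) auto
    also have "\<dots> = lincomb W \<mu>"
      using assms(2) unfolding \<mu>'_def lincomb_add_scaled by (simp add: fun_eq_iff)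
    finally show ?thesis .
  qed
  moreover have "x0 \<in> W" using x0 unfolding D_def by simp
  ultimately show thesis using that by blast
qed

lemma conic_caratheodory:
  assumes "finite W" "\<forall>x\<in>W. supported n x" "\<forall>x\<in>W. 0 \<le> \<mu> x"
  shows "\<exists>W' \<mu>'. W' \<subseteq> W \<and> card W' \<le> n \<and> (\<forall>x\<in>W'. 0 \<le> \<mu>' x) \<and> lincomb W' \<mu>' = lincomb W \<mu>"
  using assms
proof (induction "card W" arbitrary: W \<mu> rule: less_induct)
  case less
  show ?case
  proof (cases "fvec.dependent (rvec ` W)")
    case False
    then have "card (rvec ` W) \<le> n"
      using less.prems(2) by (intro independent_supported_card_le) auto
    then have "card W \<le> n"
      using card_image[OF inj_on_subset[OF rvec_inj]] by simp
    then show ?thesis using less.prems(3) by blast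
  next
    case True
    obtain c where "lincomb W c = 0" "\<exists>x\<in>W. 0 < c x"
      using dependent_rvec_positive_relation[OF less.prems(1) True] by blast
    then obtain x0 \<mu>' where x0: "x0 \<in> W" and \<mu>': "\<forall>x\<in>W. 0 \<le> \<mu>' x"
      and comb: "lincomb (W - {x0}) \<mu>' = lincomb W \<mu>"
      using lincomb_drop_generator[OF less.prems(1) _ _ less.prems(3)] by metis
    have "card (W - {x0}) < card W"
      using x0 less.prems(1) by (meson card_Diff1_less)
    moreover have "finite (W - {x0})" "\<forall>x\<in>W - {x0}. supported n x" "\<forall>x\<in>W - {x0}. 0 \<le> \<mu>' x"
      using less.prems(1,2) \<mu>' by auto
    ultimately have "\<exists>W' \<mu>''. W' \<subseteq> W - {x0} \<and> card W' \<le> n \<and> (\<forall>x\<in>W'. 0 \<le> \<mu>'' x)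
        \<and> lincomb W' \<mu>'' = lincomb (W - {x0}) \<mu>'"
      by (rule less.hyps)
    then obtain W' \<mu>'' where "W' \<subseteq> W - {x0}" "card W' \<le> n" "\<forall>x\<in>W'. 0 \<le> \<mu>'' x"
        "lincomb W' \<mu>'' = lincomb (W - {x0}) \<mu>'"
      by blast
    then show ?thesis
      using comb by (intro exI[of _ W'] exI[of _ \<mu>'']) auto
  qed
qed

section \<open>Integer generators of a pointed polyhedral cone\<close>

locale orthant_cone =
  fixes n B :: nat and \<sigma> :: "nat \<Rightarrow> int" and G :: "(nat \<Rightarrow> int) set"
  assumes finite_rows: "finite G"
    and rows_supported: "g \<in> G \<Longrightarrow> supported n g"
    and rows_bounded: "g \<in> G \<Longrightarrow> i < n \<Longrightarrow> \<bar>g i\<bar> \<le> int B"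
    and bound_pos: "1 \<le> B"
    and sign_unit: "i < n \<Longrightarrow> \<bar>\<sigma> i\<bar> = 1"
    and sign_rows: "i < n \<Longrightarrow> unit_row i (\<sigma> i) \<in> G"
begin

definition polycone :: "(nat \<Rightarrow> real) set" where
  "polycone = {u. supported n u \<and> (\<forall>g\<in>G. 0 \<le> dot n (rvec g) u)}"

definition tight_rows :: "(nat \<Rightarrow> real) \<Rightarrow> (nat \<Rightarrow> int) set" where
  "tight_rows u = {g\<in>G. dot n (rvec g) u = 0}"

definition slack_rows :: "(nat \<Rightarrow> real) \<Rightarrow> (nat \<Rightarrow> int) set" where
  "slack_rows u = {g\<in>G. 0 < dot n (rvec g) u}"

definition extreme_ray :: "(nat \<Rightarrow> real) \<Rightarrow> bool" where
  "extreme_ray w \<longleftrightarrow> (\<forall>v. supported n v \<longrightarrow> (\<forall>g\<in>tight_rows w. dot n (rvec g) v = 0)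
     \<longrightarrow> (\<exists>c. v = fscale c w))"

definition small_rays :: "(nat \<Rightarrow> int) set" where
  "small_rays = {x. rvec x \<in> polycone \<and> (\<forall>i<n. \<bar>x i\<bar> \<le> int ((n * B) ^ (n - 1)))}"

lemma polycone_sign:
  assumes "u \<in> polycone" "i < n"
  shows "0 \<le> real_of_int (\<sigma> i) * u i"
  using assms sign_rows[of i] unfolding polycone_def by (auto simp: dot_unit_row)

lemma l1_eq_dot_on_polycone:
  assumes "u \<in> polycone" "m \<le> n"
  shows "(\<Sum>i<m. \<bar>u i\<bar>) = dot m (rvec \<sigma>) u"
  unfolding dot_def
proof (intro sum.cong refl)
  fix i assume "i \<in> {..<m}"
  then have "0 \<le> \<sigma> i * u i" "\<bar>\<sigma> i\<bar> = 1"
    using assms polycone_sign sign_unit by auto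
  then show "\<bar>u i\<bar> = rvec \<sigma> i * u i"
    by (auto simp: abs_if split: if_splits)
qed

lemma polycone_eq_0:
  assumes "u \<in> polycone" "dot n (rvec \<sigma>) u = 0"
  shows "u = 0"
proof -
  have "(\<Sum>i<n. \<bar>u i\<bar>) = 0"
    using assms l1_eq_dot_on_polycone by simp
  then have "\<forall>i<n. u i = 0"
    using sum_nonneg_eq_0_iff[of "{..<n}" "\<lambda>i. \<bar>u i\<bar>"] by simp
  then show ?thesis
    using assms(1) supported_eq_0 unfolding polycone_def by blast
qed

lemma lincomb_in_polycone:
  assumes "finite W" "\<forall>x\<in>W. rvec x \<in> polycone" "\<forall>x\<in>W. 0 \<le> \<mu> x"
  shows "lincomb W \<mu> \<in> polycone"
proof -
  have "supported n (lincomb W \<mu>)"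
    using assms(2) unfolding polycone_def by (auto simp: supported_def lincomb_def intro!: sum.neutral)
  moreover have "0 \<le> dot n (rvec g) (lincomb W \<mu>)" if "g \<in> G" for g
    using assms that unfolding dot_lincomb polycone_def by (auto intro!: sum_nonneg)
  ultimately show ?thesis unfolding polycone_def by blast
qed

lemma tight_rows_subset: "tight_rows u \<subseteq> G"
  by (auto simp: tight_rows_def)

lemma tight_rows_spanning_subset:
  assumes "w \<in> polycone" "w \<noteq> 0"
  obtains T where "T \<subseteq> tight_rows w" "card T < n"
    "\<forall>v. (\<forall>h\<in>T. dot n (rvec h) v = 0) \<longrightarrow> (\<forall>g\<in>tight_rows w. dot n (rvec g) v = 0)"
proof -
  obtain Bs where Bs_sub: "Bs \<subseteq> rvec ` tight_rows w" and indep: "fvec.independent Bs"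
    and spans: "rvec ` tight_rows w \<subseteq> fvec.span Bs"
    by (rule fvec.maximal_independent_subset)
  have supp: "\<forall>f\<in>Bs. supported n f"
    using Bs_sub tight_rows_subset rows_supported by fastforce
  have "card Bs \<noteq> n"
  proof
    assume full: "card Bs = n"
    have "fvec.span Bs \<subseteq> {f. dot n f w = 0}"
      using Bs_sub subspace_dot_eq_0 by (intro fvec.span_minimal) (auto simp: tight_rows_def)
    then have "w i = 0" if "i < n" for i
      using unit_row_in_span_of_full_independent[OF indep supp full that] dot_unit_row[OF that]
      by auto
    then show False
      using assms supported_eq_0 unfolding polycone_def by blast
  qed
  then have card_lt: "card Bs < n"
    using independent_supported_card_le(2)[OF indep supp] by simp
  obtain T where T: "T \<subseteq> tight_rows w" "Bs = rvec ` T"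
    using Bs_sub by (auto simp: subset_image_iff)
  show thesis
  proof
    show "T \<subseteq> tight_rows w" by (fact T(1))
    show "card T < n"
      using card_lt card_image[OF inj_on_subset[OF rvec_inj]] T(2) by simp
    show "\<forall>v. (\<forall>h\<in>T. dot n (rvec h) v = 0) \<longrightarrow> (\<forall>g\<in>tight_rows w. dot n (rvec g) v = 0)"
    proof (intro allI impI ballI)
      fix v g
      assume "\<forall>h\<in>T. dot n (rvec h) v = 0" "g \<in> tight_rows w"
      moreover have "fvec.span Bs \<subseteq> {f. dot n f v = 0}"
        using calculation(1) subspace_dot_eq_0 T(2) by (intro fvec.span_minimal) auto
      ultimately show "dot n (rvec g) v = 0"
        using spans by auto
    qed
  qed
qed

lemma extreme_ray_small_integer:
  assumes "w \<in> polycone" "w \<noteq> 0" "extreme_ray w"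
  obtains x l where "x \<in> small_rays" "0 < l" "w = fscale l (rvec x)"
proof -
  obtain T where T: "T \<subseteq> tight_rows w" "card T < n"
    "\<forall>v. (\<forall>h\<in>T. dot n (rvec h) v = 0) \<longrightarrow> (\<forall>g\<in>tight_rows w. dot n (rvec g) v = 0)"
    using assms(1,2) by (rule tight_rows_spanning_subset)
  have T_finite: "finite T" and T_bounded: "\<And>g i. g \<in> T \<Longrightarrow> i < n \<Longrightarrow> \<bar>g i\<bar> \<le> int B"
    using T(1) tight_rows_subset[of w] finite_rows rows_bounded by (auto intro: finite_subset)
  obtain x where x_supp: "supported n x" and x_nz: "\<exists>i<n. x i \<noteq> 0"
    and x_small: "\<forall>i<n. \<bar>x i\<bar> \<le> int ((n * B) ^ (n - 1))"
    and x_ker: "\<forall>g\<in>T. (\<Sum>i<n. g i * x i) = 0"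
    using siegel_lemma[OF T_finite T(2) bound_pos, of thesis] T_bounded by blast
  have "\<forall>h\<in>T. dot n (rvec h) (rvec x) = 0"
    using x_ker by (simp add: dot_rvec_rvec)
  then have "\<forall>g\<in>tight_rows w. dot n (rvec g) (rvec x) = 0"
    using T(3) by blast
  then obtain c where c: "rvec x = fscale c w"
    using assms(3) x_supp unfolding extreme_ray_def by fastforce
  have "c \<noteq> 0"
    using x_nz c by (auto simp: fun_eq_iff)
  define x' where "x' = (if 0 < c then x else - x)"
  have x': "rvec x' = fscale \<bar>c\<bar> w"
    using c by (auto simp: x'_def fun_eq_iff)
  have "rvec x' \<in> polycone"
    using assms(1) x_supp unfolding polycone_def x' by (auto simp: supported_def)
  moreover have "\<forall>i<n. \<bar>x' i\<bar> \<le> int ((n * B) ^ (n - 1))"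
    using x_small by (simp add: x'_def)
  moreover have "w = fscale (1 / \<bar>c\<bar>) (rvec x')"
    using \<open>c \<noteq> 0\<close> unfolding x' by (auto simp: fun_eq_iff)
  ultimately show thesis
    using that[of x' "1 / \<bar>c\<bar>"] \<open>c \<noteq> 0\<close> unfolding small_rays_def by auto
qed

lemma polycone_step:
  assumes u: "u \<in> polycone" and v_supp: "supported n v"
    and v_tight: "\<forall>g\<in>tight_rows u. dot n (rvec g) v = 0"
    and v_neg: "\<exists>g\<in>G. dot n (rvec g) v < 0"
  obtains t where "0 < t" "u + fscale t v \<in> polycone"
    "card (slack_rows (u + fscale t v)) < card (slack_rows u)"
proof -
  define D where "D = {g\<in>G. dot n (rvec g) v < 0}"
  have D_slack: "0 < dot n (rvec g) u" if "g \<in> D" for g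
    using that u v_tight unfolding D_def polycone_def tight_rows_def by force
  have "finite D" "D \<noteq> {}" "\<And>g. g \<in> D \<Longrightarrow> 0 < - dot n (rvec g) v"
    using finite_rows v_neg unfolding D_def by auto
  then obtain g0 where g0: "g0 \<in> D" and ratio: "\<And>g. g \<in> D \<Longrightarrow>
      dot n (rvec g0) u / (- dot n (rvec g0) v) * (- dot n (rvec g) v) \<le> dot n (rvec g) u"
    using ratio_test[where p = "\<lambda>g. dot n (rvec g) u"] by meson
  define t where "t = dot n (rvec g0) u / (- dot n (rvec g0) v)"
  have t_pos: "0 < t"
    using g0 D_slack unfolding t_def D_def by (simp add: divide_pos_neg)
  have "u + fscale t v \<in> polycone"
    unfolding polycone_def
  proof (intro CollectI conjI ballI)
    show "supported n (u + fscale t v)"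
      using u v_supp unfolding polycone_def by (simp add: supported_def)
    fix g assume "g \<in> G"
    show "0 \<le> dot n (rvec g) (u + fscale t v)"
    proof (cases "g \<in> D")
      case True
      then show ?thesis using ratio[OF True] unfolding t_def by simp
    next
      case False
      then show ?thesis
        using \<open>g \<in> G\<close> u t_pos unfolding D_def polycone_def by simp
    qed
  qed
  moreover have "slack_rows (u + fscale t v) \<subset> slack_rows u"
  proof
    show "slack_rows (u + fscale t v) \<subseteq> slack_rows u"
      using u v_tight unfolding slack_rows_def tight_rows_def polycone_def
      by (auto simp: order_le_less)
    have "dot n (rvec g0) (u + fscale t v) = 0"
      using g0 unfolding t_def D_def by simp
    then have "g0 \<notin> slack_rows (u + fscale t v)"
      by (simp add: slack_rows_def)
    moreover have "g0 \<in> slack_rows u"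
      using g0 D_slack unfolding slack_rows_def D_def by auto
    ultimately show "slack_rows (u + fscale t v) \<noteq> slack_rows u"
      by blast
  qed
  then have "card (slack_rows (u + fscale t v)) < card (slack_rows u)"
    using finite_rows by (intro psubset_card_mono) (auto simp: slack_rows_def)
  ultimately show thesis
    using t_pos that by blast
qed

lemma orthogonal_to_rows_eq_0:
  assumes "supported n v" "\<forall>g\<in>G. dot n (rvec g) v = 0"
  shows "v = 0"
proof -
  have "v i = 0" if "i < n" for i
  proof -
    have "dot n (rvec (unit_row i (\<sigma> i))) v = 0"
      using assms(2) sign_rows[OF that] by blast
    then show ?thesis
      using sign_unit[OF that] that by (auto simp: dot_unit_row)
  qed
  then show ?thesis
    using assms(1) supported_eq_0 by blast
qed

lemma negative_row_exists:
  assumes "supported n v" "v \<noteq> 0" "dot n (rvec \<sigma>) v = 0"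
  shows "\<exists>g\<in>G. dot n (rvec g) v < 0"
proof (rule ccontr)
  assume "\<not> ?thesis"
  then have "v \<in> polycone"
    using assms(1) unfolding polycone_def by (auto simp: not_less)
  then show False
    using assms(2,3) polycone_eq_0 by blast
qed

lemma non_extreme_split:
  assumes u: "u \<in> polycone" and not_extreme: "\<not> extreme_ray u"
  obtains v t1 t2 where "0 < t1" "0 < t2"
    "u + fscale t1 v \<in> polycone" "card (slack_rows (u + fscale t1 v)) < card (slack_rows u)"
    "u + fscale t2 (- v) \<in> polycone" "card (slack_rows (u + fscale t2 (- v))) < card (slack_rows u)"
proof -
  obtain w where w_supp: "supported n w" and w_tight: "\<forall>g\<in>tight_rows u. dot n (rvec g) w = 0"
    and w_indep: "\<forall>c. w \<noteq> fscale c u"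
    using not_extreme unfolding extreme_ray_def by blast
  have "u \<noteq> 0"
  proof
    assume "u = 0"
    then have "w = 0"
      using w_supp w_tight orthogonal_to_rows_eq_0 by (simp add: tight_rows_def dot_def)
    then show False
      using w_indep \<open>u = 0\<close> by (auto simp: fun_eq_iff)
  qed
  \<comment> \<open>The \<open>\<ell>\<^sub>1\<close>-norm is linear on the cone; removing the \<open>u\<close>-component of \<open>w\<close> along it
    leaves a direction \<open>v\<close> such that neither \<open>v\<close> nor \<open>-v\<close> lies in the cone.\<close>
  define r where "r = dot n (rvec \<sigma>) w / dot n (rvec \<sigma>) u"
  define v where "v = w - fscale r u"
  have "dot n (rvec \<sigma>) u \<noteq> 0"
    using u \<open>u \<noteq> 0\<close> polycone_eq_0 by blast
  then have l1_v: "dot n (rvec \<sigma>) v = 0"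
    unfolding v_def r_def by simp
  have v_supp: "supported n v"
    using w_supp u unfolding v_def polycone_def by (simp add: supported_def)
  have v_nz: "v \<noteq> 0"
    using w_indep unfolding v_def by (metis eq_iff_diff_eq_0)
  have v_tight: "\<forall>g\<in>tight_rows u. dot n (rvec g) v = 0"
    and neg_v_tight: "\<forall>g\<in>tight_rows u. dot n (rvec g) (- v) = 0"
    using w_tight unfolding v_def tight_rows_def by auto
  obtain t1 where "0 < t1" "u + fscale t1 v \<in> polycone"
    "card (slack_rows (u + fscale t1 v)) < card (slack_rows u)"
    using polycone_step[OF u v_supp v_tight] negative_row_exists[OF v_supp v_nz l1_v] by blast
  moreover have "supported n (- v)" "- v \<noteq> 0" "dot n (rvec \<sigma>) (- v) = 0"
    using v_supp v_nz l1_v by (auto simp: supported_def)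
  then obtain t2 where "0 < t2" "u + fscale t2 (- v) \<in> polycone"
    "card (slack_rows (u + fscale t2 (- v))) < card (slack_rows u)"
    using polycone_step[OF u _ neg_v_tight] negative_row_exists by blast
  ultimately show thesis
    using that by blast
qed

lemma polycone_decomposition:
  assumes "u \<in> polycone"
  shows "\<exists>W \<mu>. finite W \<and> W \<subseteq> small_rays \<and> (\<forall>x\<in>W. 0 \<le> \<mu> x) \<and> lincomb W \<mu> = u"
  using assms
proof (induction "card (slack_rows u)" arbitrary: u rule: less_induct)
  case less
  consider "u = 0" | "u \<noteq> 0" "extreme_ray u" | "\<not> extreme_ray u"
    by blast
  then show ?case
  proof cases
    case 1
    then show ?thesis
      by (intro exI[of _ "{}"]) (auto simp: lincomb_def)
  next
    case 2
    then obtain x l where "x \<in> small_rays" "0 < l" "u = fscale l (rvec x)"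
      using extreme_ray_small_integer less.prems by blast
    then show ?thesis
      by (intro exI[of _ "{x}"] exI[of _ "\<lambda>_. l"]) (auto simp: lincomb_def fun_eq_iff)
  next
    case 3
    then obtain v t1 t2 where t_pos: "0 < t1" "0 < t2"
      and "u + fscale t1 v \<in> polycone" "card (slack_rows (u + fscale t1 v)) < card (slack_rows u)"
      and "u + fscale t2 (- v) \<in> polycone" "card (slack_rows (u + fscale t2 (- v))) < card (slack_rows u)"
      using non_extreme_split less.prems by metis
    obtain W1 \<mu>1 where
      W1: "finite W1" "W1 \<subseteq> small_rays" "\<forall>x\<in>W1. 0 \<le> \<mu>1 x" "lincomb W1 \<mu>1 = u + fscale t1 v"
      using less.hyps[OF \<open>card (slack_rows (u + fscale t1 v)) < card (slack_rows u)\<close>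
        \<open>u + fscale t1 v \<in> polycone\<close>] by blast
    obtain W2 \<mu>2 where
      W2: "finite W2" "W2 \<subseteq> small_rays" "\<forall>x\<in>W2. 0 \<le> \<mu>2 x" "lincomb W2 \<mu>2 = u + fscale t2 (- v)"
      using less.hyps[OF \<open>card (slack_rows (u + fscale t2 (- v))) < card (slack_rows u)\<close>
        \<open>u + fscale t2 (- v) \<in> polycone\<close>] by blast
    obtain \<mu> where "\<forall>x\<in>W1 \<union> W2. 0 \<le> \<mu> x" "lincomb (W1 \<union> W2) \<mu> = u"
      using lincomb_between[OF t_pos W1(1) W2(1) W1(3) W2(3) W1(4) W2(4)] by blast
    then show ?thesis
      using W1 W2 by (intro exI[of _ "W1 \<union> W2"] exI[of _ \<mu>]) auto
  qed
qed

lemma small_rays_supported: "x \<in> small_rays \<Longrightarrow> supported n x"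
  by (simp add: small_rays_def polycone_def)

lemma l1_lincomb_small_rays_le:
  assumes "finite W" "W \<subseteq> small_rays" "\<forall>x\<in>W. 0 \<le> \<nu> x \<and> \<nu> x \<le> 1" "m \<le> n"
  shows "(\<Sum>i<m. \<bar>lincomb W \<nu> i\<bar>) \<le> real (card W * m * (n * B) ^ (n - 1))"
proof -
  have in_cone: "\<forall>x\<in>W. rvec x \<in> polycone"
    using assms(2) by (auto simp: small_rays_def)
  have "(\<Sum>i<m. \<bar>lincomb W \<nu> i\<bar>) = (\<Sum>x\<in>W. \<nu> x * dot m (rvec \<sigma>) (rvec x))"
    using assms in_cone lincomb_in_polycone l1_eq_dot_on_polycone by (simp add: dot_lincomb)
  also have "\<dots> \<le> (\<Sum>x\<in>W. real (m * (n * B) ^ (n - 1)))"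
  proof (intro sum_mono)
    fix x assume x: "x \<in> W"
    have l1_x: "dot m (rvec \<sigma>) (rvec x) = (\<Sum>i<m. \<bar>real_of_int (x i)\<bar>)"
      using in_cone x assms(4) l1_eq_dot_on_polycone[of "rvec x" m] by simp
    also have "\<dots> \<le> (\<Sum>i<m. real ((n * B) ^ (n - 1)))"
    proof (intro sum_mono)
      fix i assume "i \<in> {..<m}"
      then have "\<bar>x i\<bar> \<le> int ((n * B) ^ (n - 1))"
        using assms(2,4) x unfolding small_rays_def by auto
      then show "\<bar>real_of_int (x i)\<bar> \<le> real ((n * B) ^ (n - 1))"
        by (metis of_int_abs of_int_le_iff of_int_of_nat_eq)
    qed
    finally have "dot m (rvec \<sigma>) (rvec x) \<le> real (m * (n * B) ^ (n - 1))"
      by simp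
    moreover have "0 \<le> dot m (rvec \<sigma>) (rvec x)"
      unfolding l1_x by (intro sum_nonneg) simp
    ultimately show "\<nu> x * dot m (rvec \<sigma>) (rvec x) \<le> real (m * (n * B) ^ (n - 1))"
      using assms(3) x by (meson mult_left_le_one_le order_trans)
  qed
  finally show ?thesis
    by simp
qed

lemma polycone_small_conic_comb:
  assumes "u \<in> polycone"
  obtains W \<mu> where "finite W" "W \<subseteq> small_rays" "card W \<le> n" "\<forall>x\<in>W. 0 \<le> \<mu> x"
    "lincomb W \<mu> = u"
proof -
  obtain W \<mu> where W: "finite W" "W \<subseteq> small_rays" "\<forall>x\<in>W. 0 \<le> \<mu> x" "lincomb W \<mu> = u"
    using polycone_decomposition[OF assms] by blast
  moreover have "\<forall>x\<in>W. supported n x"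
    using W(2) small_rays_supported by blast
  ultimately obtain W' \<mu>' where W': "W' \<subseteq> W" "card W' \<le> n" "\<forall>x\<in>W'. 0 \<le> \<mu>' x"
    "lincomb W' \<mu>' = u"
    using conic_caratheodory[of W n \<mu>] by auto
  moreover have "finite W'" "W' \<subseteq> small_rays"
    using W W'(1) by (auto intro: finite_subset)
  ultimately show thesis
    using that by blast
qed

lemma small_integer_point:
  assumes n_eq: "n = Suc d" and sign_last: "\<sigma> d = 1" and y: "rvec y \<in> polycone" "y d = 1"
  obtains z where "rvec z \<in> polycone" "z d = 1"
    "(\<Sum>i<d. \<bar>z i\<bar>) \<le> int (n * d * (n * B) ^ (n - 1))"
proof -
  obtain W \<mu> where W: "finite W" "W \<subseteq> small_rays" "card W \<le> n"
    and \<mu>_nonneg: "\<forall>x\<in>W. 0 \<le> \<mu> x" and y_comb: "lincomb W \<mu> = rvec y"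
    using polycone_small_conic_comb[OF y(1)] by blast
  have "\<forall>x\<in>W. 0 \<le> x d"
  proof
    fix x assume "x \<in> W"
    then have "rvec x \<in> polycone"
      using W(2) by (auto simp: small_rays_def)
    then show "0 \<le> x d"
      using polycone_sign[of "rvec x" d] sign_last n_eq by simp
  qed
  then obtain z \<nu> where z_comb: "rvec z = lincomb W \<nu>" and "z d = 1"
    and \<nu>_bounds: "\<forall>x\<in>W. 0 \<le> \<nu> x \<and> \<nu> x \<le> 1"
    using round_lincomb[OF W(1) \<mu>_nonneg _ y_comb y(2)] by blast
  have "rvec z \<in> polycone"
    unfolding z_comb using W \<nu>_bounds by (intro lincomb_in_polycone) (auto simp: small_rays_def)
  moreover have "(\<Sum>i<d. \<bar>rvec z i\<bar>) \<le> real (n * d * (n * B) ^ (n - 1))"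
  proof -
    have "(\<Sum>i<d. \<bar>rvec z i\<bar>) \<le> real (card W * d * (n * B) ^ (n - 1))"
      unfolding z_comb using W \<nu>_bounds n_eq by (intro l1_lincomb_small_rays_le) auto
    also have "\<dots> \<le> real (n * d * (n * B) ^ (n - 1))"
      using W(3) by (intro of_nat_mono mult_right_mono) auto
    finally show ?thesis .
  qed
  then have "real_of_int (\<Sum>i<d. \<bar>z i\<bar>) \<le> real_of_int (int (n * d * (n * B) ^ (n - 1)))"
    by simp
  then have "(\<Sum>i<d. \<bar>z i\<bar>) \<le> int (n * d * (n * B) ^ (n - 1))"
    by (rule of_int_le_iff[THEN iffD1])
  ultimately show thesis
    using that \<open>z d = 1\<close> by blast
qed

end

section \<open>The cone of a linear system\<close>

lemma finite_atoms: "finite (atoms S)"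
  by (induction S) auto

lemma constraint_set_bounded:
  assumes "finite A"
  shows "\<exists>s::nat. \<forall>(a, c)\<in>A. (\<forall>i<length a. \<bar>a ! i\<bar> \<le> int s) \<and> \<bar>c\<bar> \<le> int s"
  using assms
proof (induction rule: finite_induct)
  case empty
  then show ?case by simp
next
  case (insert ac A)
  obtain a c where ac: "ac = (a, c)" by fastforce
  obtain s where s: "\<forall>(a, c)\<in>A. (\<forall>i<length a. \<bar>a ! i\<bar> \<le> int s) \<and> \<bar>c\<bar> \<le> int s"
    using insert.IH by blast
  define M where "M = Max (insert \<bar>c\<bar> (abs ` set a))"
  have c_le: "\<bar>c\<bar> \<le> M"
    unfolding M_def by (intro Max_ge) auto
  have "\<bar>a ! i\<bar> \<le> M" if "i < length a" for i
    unfolding M_def using that by (intro Max_ge) auto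
  then have ac_bound: "(\<forall>i<length a. \<bar>a ! i\<bar> \<le> int (nat M)) \<and> \<bar>c\<bar> \<le> int (nat M)"
    using c_le by auto
  have weaken: "(\<forall>i<length a'. \<bar>a' ! i\<bar> \<le> int t) \<and> \<bar>c'\<bar> \<le> int t"
    if "(\<forall>i<length a'. \<bar>a' ! i\<bar> \<le> int t0) \<and> \<bar>c'\<bar> \<le> int t0" "t0 \<le> t" for a' c' t0 t
    using that by (auto intro: order_trans)
  show ?case
  proof (intro exI[of _ "max s (nat M)"] ballI, clarify)
    fix a' c' assume "(a', c') \<in> insert ac A"
    then consider "a' = a" "c' = c" | "(a', c') \<in> A"
      using ac by blast
    then show "(\<forall>i<length a'. \<bar>a' ! i\<bar> \<le> int (max s (nat M))) \<and> \<bar>c'\<bar> \<le> int (max s (nat M))"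
    proof cases
      case 1
      then show ?thesis using weaken[OF ac_bound] by simp
    next
      case 2
      then show ?thesis using weaken s by fastforce
    qed
  qed
qed

lemma sys_norm_bounds:
  assumes "(a, c) \<in> atoms S"
  shows "\<forall>i<length a. \<bar>a ! i\<bar> \<le> int (sys_norm S)" "\<bar>c\<bar> \<le> int (sys_norm S)"
proof -
  have "\<forall>(a, c)\<in>atoms S. (\<forall>i<length a. \<bar>a ! i\<bar> \<le> int (sys_norm S)) \<and> \<bar>c\<bar> \<le> int (sys_norm S)"
    unfolding sys_norm_def by (rule LeastI_ex[OF constraint_set_bounded[OF finite_atoms[of S]]])
  then show "\<forall>i<length a. \<bar>a ! i\<bar> \<le> int (sys_norm S)" "\<bar>c\<bar> \<le> int (sys_norm S)"
    using assms by auto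
qed

lemma dim_sys_length: "dim_sys d S \<Longrightarrow> (a, c) \<in> atoms S \<Longrightarrow> length a = d"
  by (auto simp: dim_sys_def)

lemma sat_cong_atoms:
  assumes "\<forall>(a, c)\<in>atoms S. (ip a x = c \<longleftrightarrow> ip a y = c) \<and> (c \<le> ip a x \<longleftrightarrow> c \<le> ip a y)"
  shows "sat x S \<longleftrightarrow> sat y S"
  using assms by (induction S) auto

definition hom_row :: "int list \<Rightarrow> int \<Rightarrow> nat \<Rightarrow> int" where
  "hom_row a b i = (if i < length a then a ! i else if i = length a then - b else 0)"

definition hom_point :: "int list \<Rightarrow> nat \<Rightarrow> int" where
  "hom_point y i = (if i < length y then y ! i else if i = length y then 1 else 0)"

lemma dot_hom_row:
  assumes "length a = d"
  shows "dot (Suc d) (rvec (hom_row a b)) (rvec z) = real_of_int (ip a (map z [0..<d]) - b * z d)"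
proof -
  have "(\<Sum>i<d. hom_row a b i * z i) = (\<Sum>i<d. a ! i * z i)"
    using assms by (intro sum.cong) (auto simp: hom_row_def)
  then show ?thesis
    using assms by (simp add: dot_rvec_rvec ip_def hom_row_def)
qed

lemma map_hom_point: "map (hom_point y) [0..<length y] = y"
  by (rule nth_equalityI) (simp_all add: hom_point_def)

text \<open>The rows record on which side of each constraint the solution \<open>y\<close> lies, in the
  homogenised form \<open>\<langle>a, x\<rangle> - b t \<ge> 0\<close>; a lattice point with \<open>t = 1\<close> satisfying them lies on
  the same side of every constraint as \<open>y\<close>.\<close>
definition type_rows :: "int list \<Rightarrow> int list \<Rightarrow> int \<Rightarrow> (nat \<Rightarrow> int) set" where
  "type_rows y a c =
    (if c < ip a y then {hom_row a (c + 1)}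
     else if ip a y = c then {hom_row a c, - hom_row a c}
     else {- hom_row a (c - 1)})"

lemma type_rows_hom_point:
  assumes "length a = length y" "g \<in> type_rows y a c"
  shows "0 \<le> dot (Suc (length y)) (rvec g) (rvec (hom_point y))"
  using assms by (auto simp: type_rows_def dot_hom_row map_hom_point hom_point_def split: if_splits)

lemma type_rows_same_side:
  assumes "length a = d" "z d = 1" "\<forall>g\<in>type_rows y a c. 0 \<le> dot (Suc d) (rvec g) (rvec z)"
  shows "(ip a (map z [0..<d]) = c \<longleftrightarrow> ip a y = c) \<and> (c \<le> ip a (map z [0..<d]) \<longleftrightarrow> c \<le> ip a y)"
  using assms by (auto simp: type_rows_def dot_hom_row split: if_splits)

lemma type_rows_supported:
  assumes "length a = d" "g \<in> type_rows y a c"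
  shows "supported (Suc d) g"
  using assms by (auto simp: type_rows_def supported_def hom_row_def split: if_splits)

lemma type_rows_bounded:
  assumes "(a, c) \<in> atoms S" "g \<in> type_rows y a c"
  shows "\<bar>g i\<bar> \<le> int (sys_norm S + 1)"
  using assms sys_norm_bounds[OF assms(1)]
  by (auto simp: type_rows_def hom_row_def split: if_splits)

definition hom_sign :: "int list \<Rightarrow> nat \<Rightarrow> int" where
  "hom_sign y i = (if 0 \<le> hom_point y i then 1 else -1)"

definition sys_rows :: "lsys \<Rightarrow> int list \<Rightarrow> (nat \<Rightarrow> int) set" where
  "sys_rows S y = (\<lambda>i. unit_row i (hom_sign y i)) ` {..length y} \<union> (\<Union>(a, c)\<in>atoms S. type_rows y a c)"

lemma sys_rows_cases:
  assumes "g \<in> sys_rows S y"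
  obtains (sign) i where "i \<le> length y" "g = unit_row i (hom_sign y i)"
    | (constraint) a c where "(a, c) \<in> atoms S" "g \<in> type_rows y a c"
  using assms by (auto simp: sys_rows_def)

locale same_side_cone =
  fixes S :: lsys and y :: "int list"
  assumes dim: "dim_sys (length y) S"
begin

sublocale orthant_cone "Suc (length y)" "sys_norm S + 1" "hom_sign y" "sys_rows S y"
proof
  show "finite (sys_rows S y)"
    using finite_atoms by (auto simp: sys_rows_def type_rows_def)
  show "supported (Suc (length y)) g" if "g \<in> sys_rows S y" for g
    using that
  proof (cases rule: sys_rows_cases)
    case (sign j)
    then show ?thesis by (simp add: supported_unit_row)
  next
    case (constraint a c)
    then show ?thesis using dim_sys_length[OF dim] type_rows_supported by blast
  qed
  show "\<bar>g i\<bar> \<le> int (sys_norm S + 1)" if "g \<in> sys_rows S y" for g i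
    using that
  proof (cases rule: sys_rows_cases)
    case (sign j)
    then show ?thesis by (simp add: unit_row_def hom_sign_def)
  next
    case (constraint a c)
    then show ?thesis by (rule type_rows_bounded)
  qed
next
  show "1 \<le> sys_norm S + 1" by simp
  show "\<bar>hom_sign y i\<bar> = 1" for i
    by (simp add: hom_sign_def)
  show "unit_row i (hom_sign y i) \<in> sys_rows S y" if "i < Suc (length y)" for i
    using that by (auto simp: sys_rows_def)
qed

lemma hom_point_in_polycone: "rvec (hom_point y) \<in> polycone"
  unfolding polycone_def
proof (intro CollectI conjI ballI)
  show "supported (Suc (length y)) (rvec (hom_point y))"
    by (simp add: supported_def hom_point_def)
  fix g assume "g \<in> sys_rows S y"
  then show "0 \<le> dot (Suc (length y)) (rvec g) (rvec (hom_point y))"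
  proof (cases rule: sys_rows_cases)
    case (sign i)
    then show ?thesis by (simp add: dot_unit_row hom_sign_def)
  next
    case (constraint a c)
    then show ?thesis using dim_sys_length[OF dim] type_rows_hom_point by blast
  qed
qed

lemma small_same_side_point:
  obtains z where "rvec z \<in> polycone" "z (length y) = 1"
    "(\<Sum>i<length y. \<bar>z i\<bar>)
      \<le> int (Suc (length y) * length y * (Suc (length y) * (sys_norm S + 1)) ^ length y)"
proof -
  have "hom_sign y (length y) = 1" "hom_point y (length y) = 1"
    by (simp_all add: hom_sign_def hom_point_def)
  then obtain z where "rvec z \<in> polycone" "z (length y) = 1"
    "(\<Sum>i<length y. \<bar>z i\<bar>)
      \<le> int (Suc (length y) * length y * (Suc (length y) * (sys_norm S + 1)) ^ (Suc (length y) - 1))"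
    by (rule small_integer_point[OF refl _ hom_point_in_polycone])
  then show thesis
    by (intro that) simp_all
qed

lemma polycone_point_sat:
  assumes "rvec z \<in> polycone" "z (length y) = 1"
  shows "sat (map z [0..<length y]) S \<longleftrightarrow> sat y S"
proof (intro sat_cong_atoms ballI, clarify)
  fix a c assume ac: "(a, c) \<in> atoms S"
  then have "type_rows y a c \<subseteq> sys_rows S y"
    by (auto simp: sys_rows_def)
  then have "\<forall>g\<in>type_rows y a c. 0 \<le> dot (Suc (length y)) (rvec g) (rvec z)"
    using assms(1) unfolding polycone_def by blast
  then show "(ip a (map z [0..<length y]) = c \<longleftrightarrow> ip a y = c)
      \<and> (c \<le> ip a (map z [0..<length y]) \<longleftrightarrow> c \<le> ip a y)"
    using dim_sys_length[OF dim ac] assms(2) by (intro type_rows_same_side)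
qed

end

lemma cone_bound_le:
  fixes d s :: nat
  shows "Suc d * d * (Suc d * (s + 1)) ^ d \<le> (2 + d + d * s) ^ (2 * d + 1)"
proof -
  define N where "N = 2 + d + d * s"
  have "d * (s + 1) ^ d \<le> N ^ d"
  proof (cases "d = 0")
    case False
    then have "d * (s + 1) ^ d \<le> d ^ d * (s + 1) ^ d"
      by (metis One_nat_def less_one linorder_not_le mult_le_mono1 power_increasing power_one_right)
    also have "\<dots> = (d * (s + 1)) ^ d"
      by (rule power_mult_distrib[symmetric])
    also have "\<dots> \<le> N ^ d"
      unfolding N_def by (intro power_mono) (auto simp: algebra_simps)
    finally show ?thesis .
  qed simp
  moreover have "Suc d ^ Suc d \<le> N ^ Suc d"
    unfolding N_def by (intro power_mono) auto
  ultimately have "Suc d ^ Suc d * (d * (s + 1) ^ d) \<le> N ^ Suc d * N ^ d"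
    by (rule mult_le_mono[rotated])
  also have "\<dots> = N ^ (2 * d + 1)"
    by (simp add: mult_2 flip: power_add)
  moreover have "Suc d * d * (Suc d * (s + 1)) ^ d = Suc d ^ Suc d * (d * (s + 1) ^ d)"
    by (simp only: power_mult_distrib power_Suc ac_simps)
  ultimately show ?thesis
    unfolding N_def by simp
qed

theorem lemma22:
  fixes d :: nat and S :: lsys
  assumes "dim_sys d S"
    and "\<exists>x. length x = d \<and> sat x S"
  shows "\<exists>x. length x = d \<and> sat x S \<and>
           norm1 x \<le> (2 + int d + int d * int (sys_norm S)) ^ (2 * d + 1)"
proof -
  obtain y where y: "length y = d" "sat y S"
    using assms(2) by blast
  interpret same_side_cone S y
    using assms(1) y(1) by unfold_locales simp
  obtain z where z: "rvec z \<in> polycone" "z d = 1"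
    and "(\<Sum>i<d. \<bar>z i\<bar>) \<le> int (Suc d * d * (Suc d * (sys_norm S + 1)) ^ d)"
    using small_same_side_point y(1) by blast
  then have "(\<Sum>i<d. \<bar>z i\<bar>) \<le> int ((2 + d + d * sys_norm S) ^ (2 * d + 1))"
    using cone_bound_le[of d "sys_norm S"] by (meson of_nat_le_iff order_trans)
  then have "norm1 (map z [0..<d]) \<le> int ((2 + d + d * sys_norm S) ^ (2 * d + 1))"
    unfolding norm1_def by simp
  also have "\<dots> = (2 + int d + int d * int (sys_norm S)) ^ (2 * d + 1)"
    by (simp only: of_nat_power of_nat_add of_nat_mult of_nat_numeral)
  finally show ?thesis
    using polycone_point_sat z y by (intro exI[of _ "map z [0..<d]"]) simp
qed

end
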